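(* Let $t\ge 2$ and $s\ge1$ be integers and let $H$ be a $t$-uniform hypergraph on the vertex set $[n]=\{1,\dots,n\}$. Suppose $H$ does not contain a complete $t$-partite hypergraph with parts $V_1,\dots,V_t\subseteq[n]$ such that $|V_i|=s$ for all $i$ and every element of $V_i$ is smaller than every element of $V_j$ whenever $i<j$ (i.e., there are no such sets with every $t$-set $\{v_1,\dots,v_t\}$, $v_i\in V_i$, being an edge of $H$). Then $H$ has at most $2n^{t-\delta}$ edges, where $\delta=\frac{1}{ts^{t-1}}$. *)

theory Defs
  imports Complex_Main
begin

definition uniform_hypergraph :: "nat \<Rightarrow> nat \<Rightarrow> nat set set \<Rightarrow> bool" where
  "uniform_hypergraph t n H \<longleftrightarrow> (\<forall>e\<in>H. e \<subseteq> {1..n} \<and> card e = t)"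

definition contains_ordered_Kt_s :: "nat \<Rightarrow> nat \<Rightarrow> nat \<Rightarrow> nat set set \<Rightarrow> bool" where
  "contains_ordered_Kt_s t s n H \<longleftrightarrow>
     (\<exists>V :: nat \<Rightarrow> nat set.
        (\<forall>i<t. V i \<subseteq> {1..n} \<and> card (V i) = s) \<and>
        (\<forall>i j x y. i < j \<and> j < t \<and> x \<in> V i \<and> y \<in> V j \<longrightarrow> x < y) \<and>
        (\<forall>f :: nat \<Rightarrow> nat. (\<forall>i<t. f i \<in> V i) \<longrightarrow> f ` {..<t} \<in> H))"

end

theory Submission
  imports Defs "HOL-Analysis.Analysis"
begin

text \<open>
  Erdos' double counting, by induction on the uniformity \<open>m + 1\<close>.  Split every edge into
  its maximum \<open>v\<close> and the \<open>m\<close>-set \<open>S\<close> below it, and let \<open>d(S)\<close> be the number of such \<open>v\<close>.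
  For an \<open>s\<close>-set \<open>T\<close>, the \<open>m\<close>-sets \<open>S\<close> lying below \<open>T\<close> with \<open>S \<union> {v} \<in> H\<close> for all
  \<open>v \<in> T\<close> form an \<open>m\<close>-uniform hypergraph without an ordered \<open>K(s, \<dots>, s)\<close> (else \<open>T\<close>
  could be appended as a last part), so by induction it has at most \<open>F\<close> edges.  Counting
  pairs \<open>(S, T)\<close> gives \<open>\<Sum>S. C(d(S), s) \<le> C(n, s) F\<close>, and convexity turns this into
  \<open>|H| \<le> (s - 1) n\<^sup>m + (n\<^bsup>m(s-1)+s\<^esup> F)\<^bsup>1/s\<^esup>\<close>.  Iterating yields
  \<open>|H| \<le> 2s n\<^bsup>m+1-s\<^sup>-\<^sup>m\<^esup>\<close>.  Weakening the exponent \<open>s\<^bsup>1-t\<^esup>\<close> to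
  \<open>\<delta> = 1/(t s\<^bsup>t-1\<^esup>)\<close> absorbs the constants once \<open>n\<^sup>\<delta> > 4\<close>; for \<open>n\<^sup>\<delta> \<le> 4\<close> the
  trivial bound \<open>|H| \<le> n\<^sup>t/2\<close> suffices.
\<close>

lemma convex_on_nonneg_power: "convex_on {0::real..} (\<lambda>x. x ^ n)"
  by (cases "even n") (auto intro: convex_on_subset[OF convex_power_even] convex_power_odd)

lemma sum_power_le_card_power_sum_power:
  fixes y :: "'a \<Rightarrow> real"
  assumes "finite A" and "\<And>a. a \<in> A \<Longrightarrow> y a \<ge> 0" and "s \<ge> 1"
  shows "(\<Sum>a\<in>A. y a) ^ s \<le> real (card A) ^ (s - 1) * (\<Sum>a\<in>A. y a ^ s)"
proof (cases "A = {}")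
  case True
  then show ?thesis using assms(3) by (simp add: power_0_left)
next
  case False
  define N where "N = real (card A)"
  have N: "N > 0" using False assms(1) by (simp add: N_def card_gt_0_iff)
  have "(\<Sum>a\<in>A. (1 / N) *\<^sub>R y a) ^ s \<le> (\<Sum>a\<in>A. (1 / N) * y a ^ s)"
    using convex_on_sum[OF assms(1) False convex_on_nonneg_power[of s], of "\<lambda>_. 1 / N" y] assms N False
    by (simp add: N_def)
  then have "(\<Sum>a\<in>A. y a) ^ s / N ^ s \<le> (\<Sum>a\<in>A. y a ^ s) / N"
    by (simp add: power_divide flip: sum_divide_distrib sum_distrib_left)
  moreover have "N ^ s = N * N ^ (s - 1)"
    using assms(3) by (simp flip: power_Suc)
  ultimately show ?thesis
    using N by (simp add: N_def field_simps)
qed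

lemma shifted_power_le_fact_binomial:
  "max (real d - real s + 1) 0 ^ s \<le> fact s * real (d choose s)"
proof (cases "s \<le> d")
  case True
  have "Suc (d - s) ^ s = (\<Prod>i\<in>{Suc (d - s)..d}. Suc (d - s))"
    using True by simp
  also have "\<dots> \<le> \<Prod>{Suc (d - s)..d}"
    by (rule prod_mono) auto
  also have "\<Prod>{Suc (d - s)..d} = fact s * (d choose s)"
    using binomial_fact_lemma[OF True] fact_eq_fact_times[of "d - s" d]
    by (simp add: algebra_simps)
  finally have "real (Suc (d - s) ^ s) \<le> real (fact s * (d choose s))"
    by (simp only: of_nat_le_iff)
  then show ?thesis
    using True by (simp add: algebra_simps)
qed (simp add: zero_power)

lemma sum_le_of_sum_binomial_le:
  fixes d :: "'a \<Rightarrow> nat"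
  assumes "finite A" and "s \<ge> 1"
    and bound: "fact s * (\<Sum>a\<in>A. real (d a choose s)) \<le> M"
  shows "real (\<Sum>a\<in>A. d a) \<le> real (s - 1) * real (card A) + (real (card A) ^ (s - 1) * M) powr (1 / real s)"
proof -
  define y where "y a = max (real (d a) - real s + 1) 0" for a
  have y_nonneg: "y a \<ge> 0" for a
    by (simp add: y_def)
  have sum_y_nonneg: "(\<Sum>a\<in>A. y a) \<ge> 0"
    by (simp add: sum_nonneg y_nonneg)
  have "real (\<Sum>a\<in>A. d a) - real (s - 1) * real (card A) = (\<Sum>a\<in>A. real (d a) - real s + 1)"
    using assms(2) by (simp add: sum_subtractf sum.distrib algebra_simps)
  also have "\<dots> \<le> (\<Sum>a\<in>A. y a)"
    by (rule sum_mono) (simp add: y_def)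
  finally have excess: "real (\<Sum>a\<in>A. d a) - real (s - 1) * real (card A) \<le> (\<Sum>a\<in>A. y a)" .
  have "(\<Sum>a\<in>A. y a ^ s) \<le> (\<Sum>a\<in>A. fact s * real (d a choose s))"
    by (rule sum_mono) (simp add: y_def shifted_power_le_fact_binomial)
  then have sum_y_power: "(\<Sum>a\<in>A. y a ^ s) \<le> M"
    using bound by (simp add: sum_distrib_left)
  have "(\<Sum>a\<in>A. y a) ^ s \<le> real (card A) ^ (s - 1) * (\<Sum>a\<in>A. y a ^ s)"
    using assms(1) y_nonneg assms(2) by (rule sum_power_le_card_power_sum_power)
  also have "\<dots> \<le> real (card A) ^ (s - 1) * M"
    using sum_y_power by (rule mult_left_mono) simp
  finally have "(\<Sum>a\<in>A. y a) ^ s \<le> real (card A) ^ (s - 1) * M" .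
  then have "((\<Sum>a\<in>A. y a) ^ s) powr (1 / real s) \<le> (real (card A) ^ (s - 1) * M) powr (1 / real s)"
    using sum_y_nonneg by (intro powr_mono2) auto
  also have "((\<Sum>a\<in>A. y a) ^ s) powr (1 / real s) = (\<Sum>a\<in>A. y a)"
    using sum_y_nonneg assms(2) by (simp add: powr_powr flip: powr_realpow')
  finally show ?thesis
    using excess by linarith
qed

lemma two_mult_le_two_power:
  assumes "s \<ge> 1"
  shows "2 * s \<le> (2::nat) ^ s"
proof -
  have "s \<le> 2 ^ (s - 1)"
    using Suc_leI[OF less_exp[of "s - 1"]] assms by simp
  then have "2 * s \<le> 2 * 2 ^ (s - 1)"
    by simp
  also have "\<dots> = 2 ^ s"
    using assms by (simp flip: power_Suc)
  finally show ?thesis .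
qed

lemma two_mult_powr_inverse_le_two:
  assumes "s \<ge> 1"
  shows "(2 * real s) powr (1 / real s) \<le> 2"
proof -
  have "real (2 * s) \<le> real (2 ^ s)"
    using two_mult_le_two_power[OF assms] by (simp only: of_nat_le_iff)
  then have "2 * real s \<le> 2 powr real s"
    by (simp add: powr_realpow)
  then have "(2 * real s) powr (1 / real s) \<le> (2 powr real s) powr (1 / real s)"
    by (intro powr_mono2) auto
  also have "\<dots> = 2"
    using assms by (simp add: powr_powr)
  finally show ?thesis .
qed

lemma powr_exponent_recursion_step:
  fixes x :: real
  assumes "x \<ge> 1" and "s \<ge> 1" and "m \<ge> 1"
  shows "(x ^ (m * (s - 1) + s) * (2 * real s * x powr (real m - 1 / real s ^ (m - 1)))) powr (1 / real s)
    \<le> 2 * x powr (real m + 1 - 1 / real s ^ m)"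
proof -
  have exponent: "real (m * (s - 1) + s) + (real m - 1 / real s ^ (m - 1)) = real s * (real m + 1 - 1 / real s ^ m)"
  proof -
    have "real s ^ m = real s * real s ^ (m - 1)"
      using assms(3) by (simp flip: power_Suc)
    then show ?thesis
      using assms(2) by (simp add: of_nat_diff field_simps)
  qed
  have "x ^ (m * (s - 1) + s) * (2 * real s * x powr (real m - 1 / real s ^ (m - 1)))
      = 2 * real s * (x powr real (m * (s - 1) + s) * x powr (real m - 1 / real s ^ (m - 1)))"
    using assms(1) by (simp only: powr_realpow[of x] mult_ac)
  also have "\<dots> = 2 * real s * x powr (real s * (real m + 1 - 1 / real s ^ m))"
    by (simp only: exponent flip: powr_add)
  finally have product: "x ^ (m * (s - 1) + s) * (2 * real s * x powr (real m - 1 / real s ^ (m - 1)))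
      = 2 * real s * x powr (real s * (real m + 1 - 1 / real s ^ m))" .
  have "(x ^ (m * (s - 1) + s) * (2 * real s * x powr (real m - 1 / real s ^ (m - 1)))) powr (1 / real s)
      = (2 * real s) powr (1 / real s) * x powr (real m + 1 - 1 / real s ^ m)"
    unfolding product using assms(1,2) by (simp add: powr_mult powr_powr)
  also have "\<dots> \<le> 2 * x powr (real m + 1 - 1 / real s ^ m)"
    using two_mult_powr_inverse_le_two[OF assms(2)] by (rule mult_right_mono) simp
  finally show ?thesis .
qed

lemma linear_term_le_powr:
  fixes x \<delta> :: real
  assumes "x \<ge> 1" and "t \<ge> 1" and "(real s + 1) * \<delta> \<le> 1" and "x powr \<delta> > 4"
  shows "real (s - 1) * x ^ (t - 1) \<le> x powr (real t - \<delta>)"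
proof -
  have "s - 1 \<le> (2::nat) ^ s"
    using less_exp[of s] by linarith
  then have "real (s - 1) \<le> 2 ^ s"
    by (metis of_nat_le_iff of_nat_numeral of_nat_power)
  also have "(2::real) ^ s \<le> (x powr \<delta>) ^ s"
    using assms(4) by (intro power_mono) auto
  also have "\<dots> = x powr (real s * \<delta>)"
    using assms(1) by (simp add: powr_powr mult.commute flip: powr_realpow)
  also have "\<dots> \<le> x powr (1 - \<delta>)"
    using assms(1,3) by (intro powr_mono) (auto simp: algebra_simps)
  finally have "real (s - 1) * x ^ (t - 1) \<le> x powr (1 - \<delta>) * x powr real (t - 1)"
    using assms(1) by (simp add: powr_realpow mult_right_mono)
  also have "\<dots> = x powr (real t - \<delta>)"
    using assms(2) by (simp add: of_nat_diff flip: powr_add)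
  finally show ?thesis .
qed

lemma two_powr_le_powr:
  fixes x \<delta> :: real
  assumes "x \<ge> 1" and "t \<ge> 2" and "x powr \<delta> > 4"
  shows "2 * x powr (real t - real t * \<delta>) \<le> x powr (real t - \<delta>)"
proof -
  have "\<delta> > 0"
  proof (rule ccontr)
    assume "\<not> \<delta> > 0"
    then have "x powr \<delta> \<le> x powr 0"
      using assms(1) by (intro powr_mono) auto
    with assms(1,3) show False
      by simp
  qed
  have "2 \<le> x powr \<delta>"
    using assms(3) by simp
  also have "\<dots> \<le> x powr ((real t - 1) * \<delta>)"
    using assms(1,2) \<open>\<delta> > 0\<close> by (intro powr_mono) auto
  finally have "2 * x powr (real t - real t * \<delta>) \<le> x powr ((real t - 1) * \<delta>) * x powr (real t - real t * \<delta>)"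
    by (intro mult_right_mono) auto
  also have "\<dots> = x powr (real t - \<delta>)"
    by (simp add: algebra_simps flip: powr_add)
  finally show ?thesis .
qed

lemma le_powr_of_trivial_and_recursive_bound:
  fixes x a :: real
  assumes "x \<ge> 1" and "t \<ge> 2" and "s \<ge> 1"
    and trivial: "a \<le> x ^ t / 2"
    and recursive: "a \<le> real (s - 1) * x ^ (t - 1) + 2 * x powr (real t - 1 / real s ^ (t - 1))"
  shows "a \<le> 2 * x powr (real t - 1 / (real t * real s ^ (t - 1)))"
proof -
  define \<delta> where "\<delta> = 1 / (real t * real s ^ (t - 1))"
  show ?thesis
  proof (cases "x powr \<delta> \<le> 4")
    case True
    have "x ^ t / 2 \<le> 2 * (x ^ t / x powr \<delta>)"
      using True assms(1) by (simp add: field_simps)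
    also have "x ^ t / x powr \<delta> = x powr (real t - \<delta>)"
      using assms(1) by (simp add: powr_diff powr_realpow)
    finally show ?thesis
      using trivial by (simp add: \<delta>_def)
  next
    case False
    have "(real s + 1) * \<delta> \<le> 1"
    proof -
      have "real s + 1 \<le> 2 * real s ^ 1"
        using assms(3) by simp
      also have "\<dots> \<le> real t * real s ^ (t - 1)"
        using assms(2,3) by (intro mult_mono power_increasing) auto
      finally show ?thesis
        using assms(3) by (simp add: \<delta>_def field_simps)
    qed
    then have "real (s - 1) * x ^ (t - 1) \<le> x powr (real t - \<delta>)"
      using linear_term_le_powr[of x t s \<delta>] assms(1,2) False by simp
    moreover have "1 / real s ^ (t - 1) = real t * \<delta>"
      using assms(2) by (simp add: \<delta>_def)
    then have "2 * x powr (real t - 1 / real s ^ (t - 1)) \<le> x powr (real t - \<delta>)"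
      using two_powr_le_powr[of x t \<delta>] assms(1,2) False by simp
    ultimately show ?thesis
      using recursive by (simp add: \<delta>_def)
  qed
qed

definition top_extensions :: "nat \<Rightarrow> nat set set \<Rightarrow> nat set \<Rightarrow> nat set" where
  "top_extensions n H S = {v \<in> {1..n}. (\<forall>x\<in>S. x < v) \<and> insert v S \<in> H}"

definition common_link :: "nat \<Rightarrow> nat \<Rightarrow> nat set set \<Rightarrow> nat set \<Rightarrow> nat set set" where
  "common_link m n H T = {S. S \<subseteq> {1..n} \<and> card S = m \<and> T \<subseteq> top_extensions n H S}"

lemma card_le_binomial_if_uniform_hypergraph:
  assumes "uniform_hypergraph t n H"
  shows "card H \<le> n choose t"
proof -
  have "H \<subseteq> {e. e \<subseteq> {1..n} \<and> card e = t}"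
    using assms by (auto simp: uniform_hypergraph_def)
  then have "card H \<le> card {e. e \<subseteq> {1..n} \<and> card e = t}"
    by (intro card_mono) auto
  then show ?thesis
    by (simp add: n_subsets)
qed

lemma card_le_half_power_if_uniform_hypergraph:
  assumes "t \<ge> 2" and "uniform_hypergraph t n H"
  shows "real (card H) \<le> real n ^ t / 2"
proof -
  have "card H * fact t \<le> n ^ t"
    using card_le_binomial_if_uniform_hypergraph[OF assms(2)] binomial_fact_pow
    by (meson le_trans mult_le_mono1)
  then have "real (card H) * fact t \<le> real n ^ t"
    by (metis of_nat_fact of_nat_le_iff of_nat_mult of_nat_power)
  moreover have "real (card H) * 2 \<le> real (card H) * fact t"
    using fact_mono[OF assms(1), where 'a = real] by (intro mult_left_mono) simp_all
  ultimately show ?thesis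
    by linarith
qed

lemma contains_ordered_K0_s_iff: "contains_ordered_Kt_s 0 s n G \<longleftrightarrow> {} \<in> G"
  by (simp add: contains_ordered_Kt_s_def)

lemma uniform_hypergraph_0_eq_empty:
  assumes "uniform_hypergraph 0 n G" and "\<not> contains_ordered_Kt_s 0 s n G"
  shows "G = {}"
proof -
  have "e = {}" if "e \<in> G" for e
    using assms(1) that by (auto simp: uniform_hypergraph_def finite_subset)
  then show ?thesis
    using assms(2) contains_ordered_K0_s_iff by blast
qed

lemma uniform_hypergraph_common_link: "uniform_hypergraph m n (common_link m n H T)"
  by (simp add: uniform_hypergraph_def common_link_def)

lemma transversal_below_common_link:
  assumes "\<And>k. k < m \<Longrightarrow> V k \<noteq> {}"
    and edges: "\<forall>f. (\<forall>k<m. f k \<in> V k) \<longrightarrow> f ` {..<m} \<in> common_link m n H T"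
    and "i < m" and "x \<in> V i" and "v \<in> T"
  shows "x < v"
proof -
  define g where "g k = (SOME z. z \<in> V k)" for k
  have "\<forall>k<m. (g(i := x)) k \<in> V k"
    using assms(1,4) by (simp add: g_def some_in_eq)
  then have "(g(i := x)) ` {..<m} \<in> common_link m n H T"
    using edges by blast
  moreover have "x \<in> (g(i := x)) ` {..<m}"
    using assms(3) by (intro image_eqI[of _ _ i]) auto
  ultimately show ?thesis
    using assms(5) by (auto simp: common_link_def top_extensions_def)
qed

lemma not_contains_common_link:
  assumes "s \<ge> 1" and H_free: "\<not> contains_ordered_Kt_s (Suc m) s n H"
    and T: "T \<subseteq> {1..n}" "card T = s"
  shows "\<not> contains_ordered_Kt_s m s n (common_link m n H T)"
proof
  assume "contains_ordered_Kt_s m s n (common_link m n H T)"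
  then obtain V where V_parts: "\<forall>i<m. V i \<subseteq> {1..n} \<and> card (V i) = s"
    and V_ordered: "\<forall>i j x y. i < j \<and> j < m \<and> x \<in> V i \<and> y \<in> V j \<longrightarrow> x < y"
    and V_edges: "\<forall>f. (\<forall>i<m. f i \<in> V i) \<longrightarrow> f ` {..<m} \<in> common_link m n H T"
    unfolding contains_ordered_Kt_s_def by blast
  have below_T: "x < v" if "i < m" "x \<in> V i" "v \<in> T" for i x v
    using transversal_below_common_link[OF _ V_edges that] V_parts assms(1)
    by (metis card.empty not_one_le_zero)
  have "contains_ordered_Kt_s (Suc m) s n H"
    unfolding contains_ordered_Kt_s_def
  proof (intro exI[of _ "V(m := T)"] conjI allI impI)
    show "(V(m := T)) i \<subseteq> {1..n}" and "card ((V(m := T)) i) = s" if "i < Suc m" for i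
      using that V_parts T by (auto simp: less_Suc_eq)
    show "x < y" if "i < j \<and> j < Suc m \<and> x \<in> (V(m := T)) i \<and> y \<in> (V(m := T)) j" for i j x y
    proof (cases "j = m")
      case True
      then show ?thesis
        using that below_T[of i x y] by auto
    next
      case False
      with that have "i < j" "j < m" "x \<in> V i" "y \<in> V j"
        by auto
      then show ?thesis
        using V_ordered by blast
    qed
    show "f ` {..<Suc m} \<in> H" if "\<forall>i<Suc m. f i \<in> (V(m := T)) i" for f
    proof -
      have "\<forall>i<m. f i \<in> V i"
        using that by (metis fun_upd_other less_SucI less_irrefl)
      then have "f ` {..<m} \<in> common_link m n H T"
        using V_edges by blast
      moreover have "f m \<in> T"
        using that by auto
      ultimately show ?thesis
        by (auto simp: common_link_def top_extensions_def lessThan_Suc)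
    qed
  qed
  with H_free show False ..
qed

lemma card_eq_sum_card_top_extensions:
  assumes "uniform_hypergraph (Suc m) n H"
  shows "card H = (\<Sum>S\<in>{S. S \<subseteq> {1..n} \<and> card S = m}. card (top_extensions n H S))"
proof -
  define A where "A = {S. S \<subseteq> {1..n} \<and> card S = m}"
  have finite_A: "finite A"
    unfolding A_def by (rule finite_subset[of _ "Pow {1..n}"]) auto
  have split_insert: "(insert v S - {Max (insert v S)}, Max (insert v S)) = (S, v)"
    if "S \<in> A" "v \<in> top_extensions n H S" for S v
  proof -
    have "finite S" "\<forall>x\<in>S. x < v"
      using that by (auto simp: A_def top_extensions_def finite_subset)
    then show ?thesis
      by (auto simp: Max_insert2 less_imp_le)
  qed
  have split_edge: "(e - {Max e}, Max e) \<in> (SIGMA S:A. top_extensions n H S)"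
    and insert_Max: "insert (Max e) (e - {Max e}) = e"
    if "e \<in> H" for e
  proof -
    have e: "e \<subseteq> {1..n}" "card e = Suc m"
      using assms that by (auto simp: uniform_hypergraph_def)
    then have "finite e" "e \<noteq> {}"
      by (auto simp: card_ge_0_finite)
    then have "Max e \<in> e"
      by (rule Max_in)
    then show "(e - {Max e}, Max e) \<in> (SIGMA S:A. top_extensions n H S)"
      and "insert (Max e) (e - {Max e}) = e"
      using e that \<open>finite e\<close> by (auto simp: A_def top_extensions_def insert_absorb less_le)
  qed
  have "bij_betw (\<lambda>(S, v). insert v S) (SIGMA S:A. top_extensions n H S) H"
    by (rule bij_betw_byWitness[where f' = "\<lambda>e. (e - {Max e}, Max e)"])
      (use split_insert split_edge insert_Max in \<open>auto simp: top_extensions_def\<close>)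
  then have "card H = card (SIGMA S:A. top_extensions n H S)"
    by (simp add: bij_betw_same_card)
  also have "\<dots> = (\<Sum>S\<in>A. card (top_extensions n H S))"
    using finite_A by (simp add: top_extensions_def)
  finally show ?thesis
    by (simp add: A_def)
qed

lemma sum_binomial_card_top_extensions:
  "(\<Sum>S\<in>{S. S \<subseteq> {1..n} \<and> card S = m}. card (top_extensions n H S) choose s)
     = (\<Sum>T\<in>{T. T \<subseteq> {1..n} \<and> card T = s}. card (common_link m n H T))"
proof -
  define A where "A = {S. S \<subseteq> {1..n} \<and> card S = m}"
  define B where "B = {T. T \<subseteq> {1..n} \<and> card T = s}"
  have "finite A" "finite B"
    unfolding A_def B_def by (auto intro: finite_subset[of _ "Pow {1..n}"])
  have "card (top_extensions n H S) choose s = card {T\<in>B. T \<subseteq> top_extensions n H S}" for S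
  proof -
    have "{T\<in>B. T \<subseteq> top_extensions n H S} = {T. T \<subseteq> top_extensions n H S \<and> card T = s}"
      by (auto simp: B_def top_extensions_def)
    then show ?thesis
      by (simp add: n_subsets top_extensions_def)
  qed
  moreover have "card (common_link m n H T) = card {S\<in>A. T \<subseteq> top_extensions n H S}" for T
    by (simp add: A_def common_link_def)
  ultimately show ?thesis
    using sum.swap_restrict[OF \<open>finite A\<close> \<open>finite B\<close>, of "\<lambda>_ _. 1::nat" "\<lambda>S T. T \<subseteq> top_extensions n H S"]
    by (simp add: A_def B_def)
qed

lemma card_le_of_common_link_bound:
  fixes F :: real
  assumes "s \<ge> 1" and "uniform_hypergraph (Suc m) n H" and "F \<ge> 0"
    and link_bound: "\<And>T. T \<subseteq> {1..n} \<Longrightarrow> card T = s \<Longrightarrow> real (card (common_link m n H T)) \<le> F"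
  shows "real (card H) \<le> real (s - 1) * real n ^ m + (real n ^ (m * (s - 1) + s) * F) powr (1 / real s)"
proof -
  define A where "A = {S. S \<subseteq> {1..n} \<and> card S = m}"
  define B where "B = {T. T \<subseteq> {1..n} \<and> card T = s}"
  have "finite A"
    unfolding A_def by (auto intro: finite_subset[of _ "Pow {1..n}"])
  have card_A: "real (card A) \<le> real n ^ m"
  proof -
    have "card A * fact m \<le> n ^ m"
      by (simp add: A_def n_subsets binomial_fact_pow)
    then have "card A \<le> n ^ m"
      using fact_ge_1[of m] by (metis le_trans mult_le_mono2 mult_1_right)
    then show ?thesis
      by (metis of_nat_le_iff of_nat_power)
  qed
  have "fact s * (\<Sum>S\<in>A. real (card (top_extensions n H S) choose s))
      = fact s * (\<Sum>T\<in>B. real (card (common_link m n H T)))"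
    using sum_binomial_card_top_extensions[where n = n and m = m and H = H and s = s]
    by (simp add: A_def B_def flip: of_nat_sum)
  also have "\<dots> \<le> fact s * (real (card B) * F)"
    using link_bound by (intro mult_left_mono) (auto simp: B_def intro: sum_bounded_above)
  also have "\<dots> \<le> real n ^ s * F"
  proof -
    have "real ((n choose s) * fact s) \<le> real (n ^ s)"
      using binomial_fact_pow by (simp only: of_nat_le_iff)
    then have "fact s * real (card B) \<le> real n ^ s"
      by (simp add: B_def n_subsets mult.commute)
    then show ?thesis
      using \<open>F \<ge> 0\<close> by (simp add: mult.assoc[symmetric] mult_right_mono)
  qed
  finally have "real (card H)
      \<le> real (s - 1) * real (card A) + (real (card A) ^ (s - 1) * (real n ^ s * F)) powr (1 / real s)"
    using card_eq_sum_card_top_extensions[OF assms(2)] sum_le_of_sum_binomial_le[OF \<open>finite A\<close> assms(1)]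
    by (simp add: A_def)
  also have "\<dots>
      \<le> real (s - 1) * real n ^ m + ((real n ^ m) ^ (s - 1) * (real n ^ s * F)) powr (1 / real s)"
    using card_A \<open>F \<ge> 0\<close> by (intro add_mono mult_left_mono powr_mono2 mult_right_mono power_mono) auto
  finally show ?thesis
    by (simp add: power_mult power_add mult.assoc)
qed

lemma card_le_of_free_links_bound:
  assumes "s \<ge> 1" and "n \<ge> 1" and "k \<ge> 1"
    and "uniform_hypergraph (Suc k) n H" and "\<not> contains_ordered_Kt_s (Suc k) s n H"
    and free_bound: "\<And>G. uniform_hypergraph k n G \<Longrightarrow> \<not> contains_ordered_Kt_s k s n G
      \<Longrightarrow> real (card G) \<le> 2 * real s * real n powr (real k - 1 / real s ^ (k - 1))"
  shows "real (card H) \<le> real (s - 1) * real n ^ k + 2 * real n powr (real k + 1 - 1 / real s ^ k)"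
proof -
  have "real (card H) \<le> real (s - 1) * real n ^ k
      + (real n ^ (k * (s - 1) + s) * (2 * real s * real n powr (real k - 1 / real s ^ (k - 1)))) powr (1 / real s)"
    using assms(1,4) free_bound uniform_hypergraph_common_link not_contains_common_link[OF assms(1,5)]
    by (intro card_le_of_common_link_bound) auto
  also have "\<dots> \<le> real (s - 1) * real n ^ k + 2 * real n powr (real k + 1 - 1 / real s ^ k)"
    using powr_exponent_recursion_step[of "real n" s k] assms(1-3) by simp
  finally show ?thesis .
qed

lemma card_le_if_not_contains_ordered_Kt_s:
  assumes "s \<ge> 1" and "n \<ge> 1" and "m \<ge> 1"
    and "uniform_hypergraph m n G" and "\<not> contains_ordered_Kt_s m s n G"
  shows "real (card G) \<le> 2 * real s * real n powr (real m - 1 / real s ^ (m - 1))"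
  using assms(3-5)
proof (induction m arbitrary: G rule: nat_induct_at_least)
  case base
  \<comment> \<open>The common links are \<open>0\<close>-uniform and free, hence empty, so \<open>F = 0\<close> works.\<close>
  have "real (card G) \<le> real (s - 1) * real n ^ 0 + (real n ^ (0 * (s - 1) + s) * 0) powr (1 / real s)"
    using assms(1) base uniform_hypergraph_common_link
      uniform_hypergraph_0_eq_empty[OF _ not_contains_common_link[OF assms(1) base(2)[unfolded One_nat_def]]]
    by (intro card_le_of_common_link_bound) auto
  then show ?case
    using assms(2) by simp
next
  case (Suc k)
  let ?e = "real k + 1 - 1 / real s ^ k"
  have bound: "real (card G) \<le> real (s - 1) * real n ^ k + 2 * real n powr ?e"
    using card_le_of_free_links_bound[OF assms(1,2) Suc.hyps(1) Suc.prems] Suc.IH by blast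
  have "real n ^ k = real n powr real k"
    using assms(2) by (simp add: powr_realpow)
  also have "\<dots> \<le> real n powr ?e"
    using assms(1,2) by (intro powr_mono) auto
  finally have "real (card G) \<le> (real (s - 1) + 2) * real n powr ?e"
    using bound mult_left_mono[of "real n ^ k" "real n powr ?e" "real (s - 1)"] by (simp add: algebra_simps)
  also have "\<dots> \<le> 2 * real s * real n powr ?e"
    using assms(1) by (intro mult_right_mono) auto
  finally show ?case
    by (simp add: add.commute)
qed

theorem lemma2p4:
  fixes t s n :: nat and H :: "nat set set"
  assumes "t \<ge> 2" and "s \<ge> 1"
    and "uniform_hypergraph t n H"
    and "\<not> contains_ordered_Kt_s t s n H"
  shows "real (card H) \<le> 2 * real n powr (real t - 1 / (real t * real s ^ (t - 1)))"
proof (cases "n = 0")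
  case True
  then show ?thesis
    using card_le_half_power_if_uniform_hypergraph[OF assms(1,3)] assms(1) by (simp add: zero_power)
next
  case False
  then have "n \<ge> 1"
    by simp
  obtain k where t: "t = Suc k" and "k \<ge> 1"
    using assms(1) by (cases t) auto
  have "real (card H) \<le> real (s - 1) * real n ^ k + 2 * real n powr (real k + 1 - 1 / real s ^ k)"
    using card_le_of_free_links_bound[OF assms(2) \<open>n \<ge> 1\<close> \<open>k \<ge> 1\<close>]
      card_le_if_not_contains_ordered_Kt_s[OF assms(2) \<open>n \<ge> 1\<close> \<open>k \<ge> 1\<close>] assms(3,4)
    unfolding t by blast
  then have "real (card H) \<le> real (s - 1) * real n ^ (t - 1) + 2 * real n powr (real t - 1 / real s ^ (t - 1))"
    by (simp add: t add.commute)
  then show ?thesis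
    using le_powr_of_trivial_and_recursive_bound \<open>n \<ge> 1\<close> assms(1,2)
      card_le_half_power_if_uniform_hypergraph[OF assms(1,3)]
    by simp
qed

end
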